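(* Suppose the true density is $g=f_\theta$ for some $\theta\in\Theta$, and the kernel satisfies $$u^{\alpha*}_\theta(y)=M f_\theta^\alpha(y)u_\theta(y)+L\quad\text{for all }y,$$ for a vector $L\in\mathbb{R}^p$ depending only on $\alpha$ and $h$ and a nonsingular $p\times p$ matrix $M$ depending on $\theta,\alpha,h$, such that for each $j=1,\dots,p$ either $\int u_{\theta_j}f_\theta^{1+\alpha}=0$ or the $j$-th column of $M$ does not depend on $\theta$. Then the influence function of the minimum $S^*$-divergence functional $T^*_{(\alpha,\lambda)}$ at $G=F_\theta$ equals that of the minimum $S$-divergence functional at $F_\theta$, namely $$IF(y;F_\theta,T^*_{(\alpha,\lambda)})=\left(\int u_\theta u_\theta^Tf_\theta^{1+\alpha}\right)^{-1}\left[u_\theta(y)f_\theta^\alpha(y)-\int u_\theta f_\theta^{1+\alpha}\right].$$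
   Context: $\{F_\theta:\theta\in\Theta\subseteq\mathbb{R}^p\}$ is a parametric family on $\mathbb{R}$ with Lebesgue densities $f_\theta$, $u_\theta=\nabla_\theta\log f_\theta$ with components $u_{\theta_j}$. Fix $\alpha\ge0$, $\lambda\in\mathbb{R}$, $A=1+\lambda(1-\alpha)$, $B=\alpha-\lambda(1-\alpha)$, and $S_{(\alpha,\lambda)}(g,f)=\frac1A\int f^{1+\alpha}-\frac{1+\alpha}{AB}\int f^Bg^A+\frac1B\int g^{1+\alpha}$ (continuous limits when $A=0$ or $B=0$). $W(x,y,h)\ge0$ is a kernel with fixed bandwidth $h>0$, a probability density in $x$ for each $y$; $f^*_\theta(x)=\int W(x,y,h)f_\theta(y)dy$, $g^*(x)=\int W(x,y,h)dG(y)$, $\tilde u_\theta=\nabla_\theta\log f^*_\theta$, $u^{\alpha*}_\theta(y)=\int\tilde u_\theta(x)\{f^*_\theta(x)\}^\alpha W(x,y,h)dx$. The minimum $S^*$-divergence functional $T^*_{(\alpha,\lambda)}(G)$ minimizes $\theta\mapsto S_{(\alpha,\lambda)}(g^*,f^*_\theta)$ (solving $\int K(g^*/f^*_\theta-1)(f^*_\theta)^{1+\alpha}\tilde u_\theta=0$, $K(\delta)=((\delta+1)^A-1)/A$, or $\log(1+\delta)$ if $A=0$). The influence function is $IF(y;G,T)=\frac{\partial}{\partial\epsilon}T((1-\epsilon)G+\epsilon\wedge_y)|_{\epsilon=0}$, $\wedge_y$ the point mass at $y$. *)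

theory Defs
  imports "HOL-Analysis.Analysis"
begin

definition SA :: "real \<Rightarrow> real \<Rightarrow> real" where
  "SA \<alpha> lam = 1 + lam * (1 - \<alpha>)"

definition SB :: "real \<Rightarrow> real \<Rightarrow> real" where
  "SB \<alpha> lam = \<alpha> - lam * (1 - \<alpha>)"

text \<open>The S-divergence S_(alpha,lambda)(g,f) between two (density) functions on the real line,
  with the continuous limits in the cases A = 0 and B = 0.\<close>
definition Sdiv :: "real \<Rightarrow> real \<Rightarrow> (real \<Rightarrow> real) \<Rightarrow> (real \<Rightarrow> real) \<Rightarrow> real" where
  "Sdiv \<alpha> lam g f =
    (let A = SA \<alpha> lam; B = SB \<alpha> lam in
     if A = 0 then
       (LINT x|lborel. f x powr (1 + \<alpha>) * ln (f x / g x))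
       - (1 / (1 + \<alpha>)) * ((LINT x|lborel. f x powr (1 + \<alpha>)) - (LINT x|lborel. g x powr (1 + \<alpha>)))
     else if B = 0 then
       (LINT x|lborel. g x powr (1 + \<alpha>) * ln (g x / f x))
       - (1 / (1 + \<alpha>)) * ((LINT x|lborel. g x powr (1 + \<alpha>)) - (LINT x|lborel. f x powr (1 + \<alpha>)))
     else
       (1 / A) * (LINT x|lborel. f x powr (1 + \<alpha>))
       - ((1 + \<alpha>) / (A * B)) * (LINT x|lborel. f x powr B * g x powr A)
       + (1 / B) * (LINT x|lborel. g x powr (1 + \<alpha>)))"

definition Kfun :: "real \<Rightarrow> real \<Rightarrow> real" where
  "Kfun A \<delta> = (if A = 0 then ln (1 + \<delta>) else ((\<delta> + 1) powr A - 1) / A)"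

definition pgrad :: "(real^'p \<Rightarrow> real) \<Rightarrow> real^'p \<Rightarrow> real^'p" where
  "pgrad \<phi> t = (\<chi> j. deriv (\<lambda>s. \<phi> (t + s *\<^sub>R axis j 1)) 0)"

definition outer :: "real^'p \<Rightarrow> real^'p \<Rightarrow> real^'p^'p" where
  "outer u v = (\<chi> i j. u $ i * v $ j)"

definition score :: "(real^'p \<Rightarrow> real \<Rightarrow> real) \<Rightarrow> real^'p \<Rightarrow> real \<Rightarrow> real^'p" where
  "score f t y = pgrad (\<lambda>s. ln (f s y)) t"

definition fstar :: "(real \<Rightarrow> real \<Rightarrow> real \<Rightarrow> real) \<Rightarrow> real \<Rightarrow> (real^'p \<Rightarrow> real \<Rightarrow> real)
    \<Rightarrow> real^'p \<Rightarrow> real \<Rightarrow> real" where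
  "fstar W h f t x = (LINT y|lborel. W x y h * f t y)"

definition sscore :: "(real \<Rightarrow> real \<Rightarrow> real \<Rightarrow> real) \<Rightarrow> real \<Rightarrow> (real^'p \<Rightarrow> real \<Rightarrow> real)
    \<Rightarrow> real^'p \<Rightarrow> real \<Rightarrow> real^'p" where
  "sscore W h f t x = pgrad (\<lambda>s. ln (fstar W h f s x)) t"

definition ualphastar :: "(real \<Rightarrow> real \<Rightarrow> real \<Rightarrow> real) \<Rightarrow> real \<Rightarrow> (real^'p \<Rightarrow> real \<Rightarrow> real)
    \<Rightarrow> real \<Rightarrow> real^'p \<Rightarrow> real \<Rightarrow> real^'p" where
  "ualphastar W h f \<alpha> t y =
     (LINT x|lborel. (fstar W h f t x powr \<alpha> * W x y h) *\<^sub>R sscore W h f t x)"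

text \<open>Kernel-smoothed density g* of the contaminated distribution (1-eps) F_theta + eps Delta_y:
  g*(x) = int W(x,z,h) d((1-eps)F_theta + eps Delta_y)(z) = (1-eps) f*_theta(x) + eps W(x,y,h).\<close>
definition gcontam :: "(real \<Rightarrow> real \<Rightarrow> real \<Rightarrow> real) \<Rightarrow> real \<Rightarrow> (real^'p \<Rightarrow> real \<Rightarrow> real)
    \<Rightarrow> real^'p \<Rightarrow> real \<Rightarrow> real \<Rightarrow> real \<Rightarrow> real" where
  "gcontam W h f \<theta> y \<epsilon> x = (1 - \<epsilon>) * fstar W h f \<theta> x + \<epsilon> * W x y h"

definition est_integrand :: "(real \<Rightarrow> real \<Rightarrow> real \<Rightarrow> real) \<Rightarrow> real \<Rightarrow> (real^'p \<Rightarrow> real \<Rightarrow> real)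
    \<Rightarrow> real \<Rightarrow> real \<Rightarrow> (real \<Rightarrow> real) \<Rightarrow> real^'p \<Rightarrow> real \<Rightarrow> real^'p" where
  "est_integrand W h f \<alpha> lam g t x =
     (Kfun (SA \<alpha> lam) (g x / fstar W h f t x - 1) * fstar W h f t x powr (1 + \<alpha>))
       *\<^sub>R sscore W h f t x"

definition est_fun :: "(real \<Rightarrow> real \<Rightarrow> real \<Rightarrow> real) \<Rightarrow> real \<Rightarrow> (real^'p \<Rightarrow> real \<Rightarrow> real)
    \<Rightarrow> real \<Rightarrow> real \<Rightarrow> (real \<Rightarrow> real) \<Rightarrow> real^'p \<Rightarrow> real^'p" where
  "est_fun W h f \<alpha> lam g t = (LINT x|lborel. est_integrand W h f \<alpha> lam g t x)"

end

theory Submission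
  imports Defs
begin

(* Differentiating the estimating equation along the contamination path,
   est_fun (g*_e) (T (g*_e)) = 0, at e = 0 gives  int D(1, IF) dx = 0.  Because K(0) = 0 and
   K'(0) = 1, the integrand is  f*^a W(x,y) u~ - f*^(1+a) u~ - f*^(1+a) u~ u~^T IF  with u~ the
   smoothed score.  Writing f*(x) = int W(x,z) f(z) dz and exchanging the order of integration,
   the kernel condition turns the three integrals into  f^a(y) M u(y) + L,  M xi + L  and  M J,
   where xi = int u f^(1+a), J = int u u^T f^(1+a); the last one also uses  int grad f = 0,
   as f_t integrates to 1 for every t.  The constant L cancels and M is invertible, whence
   J IF = f^a(y) u(y) - xi. *)

lemma has_real_derivative_along_line:
  fixes \<phi> :: "'a::real_normed_vector \<Rightarrow> real"
  assumes "(\<phi> has_derivative D) (at t)"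
  shows "((\<lambda>s. \<phi> (t + s *\<^sub>R v)) has_real_derivative D v) (at 0)"
proof -
  have "((\<lambda>s::real. t + s *\<^sub>R v) has_derivative (\<lambda>s. s *\<^sub>R v)) (at 0)"
    by (auto intro!: derivative_eq_intros)
  with assms have "((\<lambda>s. \<phi> (t + s *\<^sub>R v)) has_derivative (\<lambda>s. D (s *\<^sub>R v))) (at 0)"
    using has_derivative_compose by fastforce
  moreover have "(\<lambda>s. D (s *\<^sub>R v)) = (*) (D v)"
    using linear_cmul[OF has_derivative_linear[OF assms]] by (auto simp: fun_eq_iff)
  ultimately show ?thesis by (simp add: has_field_derivative_def)
qed

lemma has_derivative_pgrad:
  fixes \<phi> :: "real^'p \<Rightarrow> real"
  assumes "\<phi> differentiable (at t)"
  shows "(\<phi> has_derivative (\<lambda>d. pgrad \<phi> t \<bullet> d)) (at t)"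
proof -
  obtain D where D: "(\<phi> has_derivative D) (at t)"
    using assms by (auto simp: differentiable_def)
  have partial: "pgrad \<phi> t $ j = D (axis j 1)" for j
    using DERIV_imp_deriv[OF has_real_derivative_along_line[OF D]] by (simp add: pgrad_def)
  have "D d = pgrad \<phi> t \<bullet> d" for d
  proof -
    have lin: "linear D" using D by (rule has_derivative_linear)
    have "D d = D (\<Sum>i\<in>UNIV. d $ i *\<^sub>R axis i 1)"
      using basis_expansion[of d] by (simp add: scalar_mult_eq_scaleR)
    also have "\<dots> = (\<Sum>i\<in>UNIV. d $ i * D (axis i 1))"
      by (simp add: linear_sum[OF lin] linear_cmul[OF lin])
    also have "\<dots> = pgrad \<phi> t \<bullet> d"
      by (simp add: inner_vec_def partial mult.commute)
    finally show ?thesis .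
  qed
  then have "D = (\<lambda>d. pgrad \<phi> t \<bullet> d)" by (simp add: fun_eq_iff)
  with D show ?thesis by simp
qed

lemma pgrad_eq_scaleR_pgrad_ln:
  fixes \<phi> :: "real^'p \<Rightarrow> real"
  assumes "\<phi> differentiable (at t)" "\<phi> t > 0"
  shows "pgrad \<phi> t = \<phi> t *\<^sub>R pgrad (\<lambda>s. ln (\<phi> s)) t"
proof -
  have "((\<lambda>s. ln (\<phi> s)) has_derivative (\<lambda>d. (pgrad \<phi> t \<bullet> d) * inverse (\<phi> t))) (at t)"
    using assms(2) by (auto intro!: derivative_eq_intros has_derivative_pgrad[OF assms(1)])
  moreover from this have "((\<lambda>s. ln (\<phi> s)) has_derivative (\<lambda>d. pgrad (\<lambda>s. ln (\<phi> s)) t \<bullet> d)) (at t)"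
    by (intro has_derivative_pgrad) (auto simp: differentiable_def)
  ultimately have "pgrad (\<lambda>s. ln (\<phi> s)) t \<bullet> axis j 1 = (pgrad \<phi> t \<bullet> axis j 1) * inverse (\<phi> t)" for j
    by (metis has_derivative_unique)
  then show ?thesis
    using assms(2) by (simp add: vec_eq_iff cart_eq_inner_axis[symmetric] field_simps)
qed

lemma continuous_on_powr_scaleR_pgrad_ln:
  fixes \<phi> :: "real^'p \<Rightarrow> real"
  assumes diff: "\<forall>t\<in>S. \<phi> differentiable (at t)" and pos: "\<forall>t\<in>S. \<phi> t > 0"
    and cont: "continuous_on S (pgrad \<phi>)"
  shows "continuous_on S (\<lambda>t. \<phi> t powr (1 + q) *\<^sub>R pgrad (\<lambda>s. ln (\<phi> s)) t)"
proof (rule continuous_on_eq)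
  have "continuous_on S \<phi>"
    using diff by (auto intro!: differentiable_imp_continuous_on differentiable_at_imp_differentiable_on)
  then show "continuous_on S (\<lambda>t. \<phi> t powr q *\<^sub>R pgrad \<phi> t)"
    using pos cont by (auto intro!: continuous_intros)
  show "\<phi> t powr q *\<^sub>R pgrad \<phi> t = \<phi> t powr (1 + q) *\<^sub>R pgrad (\<lambda>s. ln (\<phi> s)) t" if "t \<in> S" for t
  proof -
    have "\<phi> t > 0" using pos that by blast
    with pgrad_eq_scaleR_pgrad_ln[of \<phi> t] diff that show ?thesis by (simp add: powr_add)
  qed
qed

lemma DERIV_Pearson_residual_along_line:
  fixes \<phi> :: "real^'p \<Rightarrow> real"
  assumes g: "(g has_real_derivative g') (at 0)" and "g 0 = \<phi> \<theta>"
    and pos: "\<phi> \<theta> > 0" and diff: "\<phi> differentiable (at \<theta>)"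
  shows "((\<lambda>s. g s / \<phi> (\<theta> + s *\<^sub>R v) - 1) has_real_derivative
      g' / \<phi> \<theta> - pgrad (\<lambda>s. ln (\<phi> s)) \<theta> \<bullet> v) (at 0)"
proof -
  have "((\<lambda>s. \<phi> (\<theta> + s *\<^sub>R v)) has_real_derivative pgrad \<phi> \<theta> \<bullet> v) (at 0)"
    using diff by (intro has_real_derivative_along_line has_derivative_pgrad)
  with g have "((\<lambda>s. g s / \<phi> (\<theta> + s *\<^sub>R v) - 1) has_real_derivative
      (g' * \<phi> \<theta> - \<phi> \<theta> * (pgrad \<phi> \<theta> \<bullet> v)) / (\<phi> \<theta> * \<phi> \<theta>)) (at 0)"
    using pos \<open>g 0 = \<phi> \<theta>\<close> by (auto intro!: derivative_eq_intros)
  moreover have "(g' * \<phi> \<theta> - \<phi> \<theta> * (pgrad \<phi> \<theta> \<bullet> v)) / (\<phi> \<theta> * \<phi> \<theta>)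
      = g' / \<phi> \<theta> - pgrad (\<lambda>s. ln (\<phi> s)) \<theta> \<bullet> v"
    using pos pgrad_eq_scaleR_pgrad_ln[OF diff pos] by (simp add: field_simps)
  ultimately show ?thesis by simp
qed

lemma integral_pgrad_density_eq_0:
  fixes f :: "real^'p \<Rightarrow> 'a \<Rightarrow> real"
  assumes "open \<Theta>" "\<theta> \<in> \<Theta>" "\<forall>t\<in>\<Theta>. (LINT z|M. f t z) = 1"
    and "integrable M (\<lambda>z. pgrad (\<lambda>s. f s z) \<theta>)"
    and "((\<lambda>t. LINT z|M. f t z) has_derivative (\<lambda>d. LINT z|M. pgrad (\<lambda>s. f s z) \<theta> \<bullet> d)) (at \<theta>)"
  shows "(LINT z|M. pgrad (\<lambda>s. f s z) \<theta>) = 0"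
proof -
  have "((\<lambda>t. LINT z|M. f t z) has_derivative (\<lambda>d. 0)) (at \<theta>)"
    by (rule has_derivative_transform_within_open[of "\<lambda>t. 1" _ _ _ \<Theta>]) (use assms in auto)
  with assms(5) have "(\<lambda>d. LINT z|M. pgrad (\<lambda>s. f s z) \<theta> \<bullet> d) = (\<lambda>d. 0)"
    using has_derivative_unique by blast
  from fun_cong[OF this, of "LINT z|M. pgrad (\<lambda>s. f s z) \<theta>"] show ?thesis
    using assms(4) by simp
qed

lemma bounded_bilinear_outer: "bounded_bilinear outer"
  unfolding bilinear_conv_bounded_bilinear[symmetric] bilinear_def
  by (auto intro!: linearI simp: outer_def vec_eq_iff algebra_simps)

lemma bounded_bilinear_matrix_vector_mult:
  "bounded_bilinear ((*v) :: real^'n^'m \<Rightarrow> real^'n \<Rightarrow> real^'m)"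
  unfolding bilinear_conv_bounded_bilinear[symmetric] bilinear_def
  by (auto intro!: linearI simp: matrix_vector_mult_def vec_eq_iff sum.distrib sum_distrib_left algebra_simps)

lemma bounded_bilinear_matrix_matrix_mult:
  "bounded_bilinear ((**) :: real^'n^'m \<Rightarrow> real^'k^'n \<Rightarrow> real^'k^'m)"
  unfolding bilinear_conv_bounded_bilinear[symmetric] bilinear_def
  by (auto intro!: linearI simp: matrix_matrix_mult_def vec_eq_iff sum.distrib sum_distrib_left algebra_simps)

lemmas outer_add_left = bounded_bilinear.add_left[OF bounded_bilinear_outer]
lemmas outer_scaleR_left = bounded_bilinear.scaleR_left[OF bounded_bilinear_outer]
lemmas outer_scaleR_right = bounded_bilinear.scaleR_right[OF bounded_bilinear_outer]

lemma matrix_vector_mult_outer: "outer a b *v v = (b \<bullet> v) *\<^sub>R a"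
  by (simp add: vec_eq_iff outer_def matrix_vector_mult_def inner_vec_def sum_distrib_left mult_ac)

lemma outer_matrix_vector_mult: "outer (M *v a) b = M ** outer a b"
  by (simp add: vec_eq_iff outer_def matrix_vector_mult_def matrix_matrix_mult_def sum_distrib_left mult_ac)

lemma matrix_inv_solve:
  fixes A :: "'a::field^'n^'m"
  assumes "invertible A" and "A *v x = b"
  shows "x = matrix_inv A *v b"
proof -
  have "matrix_inv A ** A = mat 1"
    using assms(1) unfolding invertible_def matrix_inv_def by (rule someI2_ex) auto
  with assms(2) show ?thesis by (metis matrix_vector_mul_assoc matrix_vector_mul_lid)
qed

lemma matrix_inv_solve_cancel:
  fixes M J :: "real^'n^'n"
  assumes "invertible M" "invertible J"
    and "M *v w + L - (M *v \<xi> + L) - (M ** J) *v v = 0"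
  shows "v = matrix_inv J *v (w - \<xi>)"
proof -
  have "M *v (J *v v) = M *v (w - \<xi>)"
    using assms(3) by (simp add: matrix_vector_mul_assoc algebra_simps)
  then have "J *v v = w - \<xi>"
    using inj_matrix_vector_mult[OF assms(1)] by (auto dest: injD)
  with assms(2) show ?thesis by (rule matrix_inv_solve)
qed

section \<open>One-sided derivatives along curves\<close>

lemma at_0_within_Ico_nontrivial:
  fixes e :: real
  assumes "e > 0"
  shows "at 0 within {0..<e} \<noteq> bot"
proof -
  have "0 islimpt {0<..<e}" using assms by (rule islimpt_greaterThanLessThan1)
  then have "0 islimpt {0..<e}" by (rule islimpt_subset) auto
  then show ?thesis by (simp add: trivial_limit_within)
qed

lemma has_vector_derivative_scaleR_vanishing:
  fixes k :: "real \<Rightarrow> real" and c :: "real \<Rightarrow> 'a::real_normed_vector"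
  assumes k0: "k 0 = 0" and k: "(k has_real_derivative k') (at 0 within S)"
    and c: "(c \<longlongrightarrow> c 0) (at 0 within S)"
  shows "((\<lambda>s. k s *\<^sub>R c s) has_vector_derivative k' *\<^sub>R c 0) (at 0 within S)"
proof -
  have const: "((\<lambda>s. k s *\<^sub>R c 0) has_vector_derivative k' *\<^sub>R c 0) (at 0 within S)"
    using k by (auto intro!: derivative_eq_intros simp: has_real_derivative_iff_has_vector_derivative)
  have "((\<lambda>s. \<bar>k s / s\<bar> * norm (c s - c 0)) \<longlongrightarrow> \<bar>k'\<bar> * 0) (at 0 within S)"
    using k c k0 by (intro tendsto_intros)
      (auto simp: has_field_derivative_iff LIM_zero tendsto_norm_zero)
  then have "((\<lambda>s. norm (k s *\<^sub>R (c s - c 0) /\<^sub>R norm s)) \<longlongrightarrow> 0) (at 0 within S)"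
    by (simp add: abs_mult divide_inverse ac_simps del: scaleR_right_diff_distrib)
  then have "((\<lambda>s. k s *\<^sub>R (c s - c 0) /\<^sub>R norm s) \<longlongrightarrow> 0) (at 0 within S)"
    by (simp only: tendsto_norm_zero_iff)
  then have "((\<lambda>s. k s *\<^sub>R (c s - c 0)) has_vector_derivative 0) (at 0 within S)"
    using k0 by (simp add: has_vector_derivative_def has_derivative_at_within)
  from has_vector_derivative_add[OF const this] show ?thesis
    by (simp add: scaleR_right_diff_distrib)
qed

lemma has_vector_derivative_graph_compose:
  fixes \<Phi> :: "real \<times> 'a::real_normed_vector \<Rightarrow> 'b::real_normed_vector"
  assumes \<Phi>: "(\<Phi> has_derivative D) (at (0, x) within {0..<\<epsilon>} \<times> S)"
    and \<gamma>: "(\<gamma> has_vector_derivative v) (at 0 within {0..<\<delta>})" "\<gamma> 0 = x"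
    and "\<delta> \<le> \<epsilon>" and "\<forall>e\<in>{0..<\<delta>}. \<gamma> e \<in> S"
  shows "((\<lambda>e. \<Phi> (e, \<gamma> e)) has_vector_derivative D (1, v)) (at 0 within {0..<\<delta>})"
proof -
  have graph: "((\<lambda>e. (e, \<gamma> e)) has_derivative (\<lambda>e. (e, e *\<^sub>R v))) (at 0 within {0..<\<delta>})"
    using \<gamma> unfolding has_vector_derivative_def by (auto intro!: derivative_eq_intros)
  have "(\<lambda>e. (e, \<gamma> e)) ` {0..<\<delta>} \<subseteq> {0..<\<epsilon>} \<times> S" using assms(4,5) by auto
  with \<Phi> \<gamma>(2) have "(\<Phi> has_derivative D) (at (0, \<gamma> 0) within (\<lambda>e. (e, \<gamma> e)) ` {0..<\<delta>})"
    using has_derivative_subset by blast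
  from has_derivative_in_compose[OF graph this]
  have "((\<lambda>e. \<Phi> (e, \<gamma> e)) has_derivative (\<lambda>e. D (e, e *\<^sub>R v))) (at 0 within {0..<\<delta>})"
    by simp
  moreover have "D (e, e *\<^sub>R v) = e *\<^sub>R D (1, v)" for e
    using linear_cmul[OF has_derivative_linear[OF \<Phi>], of e "(1, v)"] by simp
  ultimately show ?thesis by (simp add: has_vector_derivative_def)
qed

lemma graph_derivative_eq_0:
  fixes \<Phi> :: "real \<times> 'a::real_normed_vector \<Rightarrow> 'b::real_normed_vector"
  assumes "(\<Phi> has_derivative D) (at (0, x) within {0..<\<epsilon>} \<times> S)"
    and "(\<gamma> has_vector_derivative v) (at 0 within {0..<\<epsilon>})" "\<gamma> 0 = x" and "\<epsilon> > 0"
    and "\<forall>e\<in>{0..<\<epsilon>}. \<gamma> e \<in> S \<and> \<Phi> (e, \<gamma> e) = 0"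
  shows "D (1, v) = 0"
proof -
  have "((\<lambda>e. \<Phi> (e, \<gamma> e)) has_vector_derivative D (1, v)) (at 0 within {0..<\<epsilon>})"
    using assms by (intro has_vector_derivative_graph_compose) auto
  moreover have "((\<lambda>e. \<Phi> (e, \<gamma> e)) has_vector_derivative 0) (at 0 within {0..<\<epsilon>})"
    by (rule has_vector_derivative_transform_within[of "\<lambda>e. 0" _ _ _ 1]) (use assms in auto)
  ultimately show ?thesis
    using vector_derivative_unique_within at_0_within_Ico_nontrivial assms(4) by blast
qed

lemma obtain_segment_in_open:
  fixes x v :: "'a::real_normed_vector"
  assumes "open S" "x \<in> S" "e > 0"
  obtains \<delta> where "0 < \<delta>" "\<delta> \<le> e" "\<forall>s\<in>{0..<\<delta>}. x + s *\<^sub>R v \<in> S"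
proof -
  obtain r where r: "r > 0" "ball x r \<subseteq> S" using assms open_contains_ball by blast
  define \<delta> where "\<delta> = min e (r / (norm v + 1))"
  show ?thesis
  proof (rule that)
    show "0 < \<delta>" using r assms(3) by (simp add: \<delta>_def add_nonneg_pos)
    show "\<delta> \<le> e" by (simp add: \<delta>_def)
    show "\<forall>s\<in>{0..<\<delta>}. x + s *\<^sub>R v \<in> S"
    proof
      fix s assume s: "s \<in> {0..<\<delta>}"
      have "norm (s *\<^sub>R v) \<le> s * (norm v + 1)" using s by (simp add: mult_left_mono)
      also have "\<dots> < r" using s by (simp add: \<delta>_def less_divide_eq add_nonneg_pos)
      finally show "x + s *\<^sub>R v \<in> S" using r(2) by (auto simp: dist_norm subset_iff)
    qed
  qed
qed

section \<open>The estimating equation along the contamination path\<close>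

lemma Kfun_0 [simp]: "Kfun A 0 = 0"
  by (simp add: Kfun_def)

lemma DERIV_Kfun_0: "(Kfun A has_real_derivative 1) (at 0)"
proof (cases "A = 0")
  case True
  have "((\<lambda>d. ln (1 + d)) has_real_derivative 1) (at 0)"
    by (auto intro!: derivative_eq_intros)
  moreover have "Kfun A = (\<lambda>d. ln (1 + d))" using True by (simp add: fun_eq_iff Kfun_def)
  ultimately show ?thesis by simp
next
  case False
  have "((\<lambda>d. ((d + 1) powr A - 1) / A) has_real_derivative 1) (at 0)"
    using False by (auto intro!: derivative_eq_intros)
  moreover have "Kfun A = (\<lambda>d. ((d + 1) powr A - 1) / A)" using False by (simp add: fun_eq_iff Kfun_def)
  ultimately show ?thesis by simp
qed

lemma has_vector_derivative_est_integrand_line: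
  fixes f :: "real^'p \<Rightarrow> real \<Rightarrow> real"
  assumes pos: "\<forall>t\<in>\<Theta>. fstar W h f t x > 0"
    and diff: "\<forall>t\<in>\<Theta>. (\<lambda>s. fstar W h f s x) differentiable (at t)"
    and cont: "continuous_on \<Theta> (pgrad (\<lambda>s. fstar W h f s x))"
    and line: "\<forall>s\<in>{0..<\<delta>}. \<theta> + s *\<^sub>R v \<in> \<Theta>" and "\<delta> > 0"
  shows "((\<lambda>s. est_integrand W h f \<alpha> lam (gcontam W h f \<theta> y s) (\<theta> + s *\<^sub>R v) x)
    has_vector_derivative
      (fstar W h f \<theta> x powr \<alpha> * W x y h) *\<^sub>R sscore W h f \<theta> x
      - fstar W h f \<theta> x powr (1 + \<alpha>) *\<^sub>R sscore W h f \<theta> x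
      - (fstar W h f \<theta> x powr (1 + \<alpha>) *\<^sub>R outer (sscore W h f \<theta> x) (sscore W h f \<theta> x)) *v v)
    (at 0 within {0..<\<delta>})"
proof -
  define \<phi> where "\<phi> = (\<lambda>t. fstar W h f t x)"
  define \<psi> where "\<psi> t = \<phi> t powr (1 + \<alpha>) *\<^sub>R sscore W h f t x" for t
  define dl where "dl = (\<lambda>s. gcontam W h f \<theta> y s x / \<phi> (\<theta> + s *\<^sub>R v) - 1)"
  define U where "U = sscore W h f \<theta> x"
  have \<theta>: "\<theta> \<in> \<Theta>" using line \<open>\<delta> > 0\<close> by force
  have F: "\<phi> \<theta> > 0" using pos \<theta> by (simp add: \<phi>_def)
  have "continuous_on \<Theta> \<psi>"
    using continuous_on_powr_scaleR_pgrad_ln[of \<Theta> \<phi>] diff pos cont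
    by (simp add: \<psi>_def \<phi>_def sscore_def)
  then have "continuous_on {0..<\<delta>} (\<lambda>s. \<psi> (\<theta> + s *\<^sub>R v))"
    using line by (auto intro!: continuous_on_compose2[of \<Theta> \<psi>] continuous_intros)
  then have \<psi>_lim: "((\<lambda>s. \<psi> (\<theta> + s *\<^sub>R v)) \<longlongrightarrow> \<psi> \<theta>) (at 0 within {0..<\<delta>})"
    using \<open>\<delta> > 0\<close> unfolding continuous_on_def
    by (metis atLeastLessThan_iff order_refl scale_zero_left add_0_right)
  have "((\<lambda>s. gcontam W h f \<theta> y s x) has_real_derivative W x y h - \<phi> \<theta>) (at 0)"
    unfolding gcontam_def \<phi>_def by (auto intro!: derivative_eq_intros)
  from DERIV_Pearson_residual_along_line[where \<phi> = \<phi> and \<theta> = \<theta>, OF this _ F]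
  have "(dl has_real_derivative (W x y h - \<phi> \<theta>) / \<phi> \<theta> - U \<bullet> v) (at 0)"
    using diff \<theta> by (simp add: dl_def gcontam_def U_def sscore_def \<phi>_def)
  moreover have "dl 0 = 0" using F by (simp add: dl_def gcontam_def \<phi>_def)
  (* K(0) = 0 and K'(0) = 1, so the weight psi only needs to be continuous at 0 *)
  ultimately have "((\<lambda>s. Kfun (SA \<alpha> lam) (dl s)) has_real_derivative (W x y h - \<phi> \<theta>) / \<phi> \<theta> - U \<bullet> v) (at 0)"
    using DERIV_chain2[of "Kfun (SA \<alpha> lam)" 1 dl 0] DERIV_Kfun_0 by simp
  then have "((\<lambda>s. Kfun (SA \<alpha> lam) (dl s) *\<^sub>R \<psi> (\<theta> + s *\<^sub>R v)) has_vector_derivative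
      ((W x y h - \<phi> \<theta>) / \<phi> \<theta> - U \<bullet> v) *\<^sub>R \<psi> (\<theta> + 0 *\<^sub>R v)) (at 0 within {0..<\<delta>})"
    by (intro has_vector_derivative_scaleR_vanishing)
      (use \<open>dl 0 = 0\<close> \<psi>_lim in \<open>auto intro: has_field_derivative_at_within\<close>)
  moreover have "est_integrand W h f \<alpha> lam (gcontam W h f \<theta> y s) (\<theta> + s *\<^sub>R v) x
      = Kfun (SA \<alpha> lam) (dl s) *\<^sub>R \<psi> (\<theta> + s *\<^sub>R v)" for s
    by (simp add: est_integrand_def dl_def \<psi>_def \<phi>_def)
  moreover have "((W x y h - \<phi> \<theta>) / \<phi> \<theta> - U \<bullet> v) *\<^sub>R \<psi> (\<theta> + 0 *\<^sub>R v)
      = (\<phi> \<theta> powr \<alpha> * W x y h) *\<^sub>R U - \<phi> \<theta> powr (1 + \<alpha>) *\<^sub>R U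
        - (\<phi> \<theta> powr (1 + \<alpha>) *\<^sub>R outer U U) *v v"
  proof -
    have "((W x y h - \<phi> \<theta>) / \<phi> \<theta> - U \<bullet> v) * \<phi> \<theta> powr (1 + \<alpha>)
        = \<phi> \<theta> powr \<alpha> * W x y h - \<phi> \<theta> powr (1 + \<alpha>) - \<phi> \<theta> powr (1 + \<alpha>) * (U \<bullet> v)"
      using F by (simp add: powr_add field_simps)
    then show ?thesis
      by (simp add: \<psi>_def U_def matrix_vector_mult_outer algebra_simps
          flip: scaleR_matrix_vector_assoc scaleR_left_diff_distrib)
  qed
  ultimately show ?thesis by (simp add: U_def \<phi>_def)
qed

lemma est_integrand_derivative_direction:
  fixes f :: "real^'p \<Rightarrow> real \<Rightarrow> real"
  assumes D: "((\<lambda>(e, t). est_integrand W h f \<alpha> lam (gcontam W h f \<theta> y e) t x) has_derivative D)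
      (at (0, \<theta>) within {0..<\<epsilon>} \<times> \<Theta>)"
    and "open \<Theta>" "\<theta> \<in> \<Theta>" "\<epsilon> > 0"
    and "\<forall>t\<in>\<Theta>. fstar W h f t x > 0"
    and "\<forall>t\<in>\<Theta>. (\<lambda>s. fstar W h f s x) differentiable (at t)"
    and "continuous_on \<Theta> (pgrad (\<lambda>s. fstar W h f s x))"
  shows "D (1, v) =
      (fstar W h f \<theta> x powr \<alpha> * W x y h) *\<^sub>R sscore W h f \<theta> x
      - fstar W h f \<theta> x powr (1 + \<alpha>) *\<^sub>R sscore W h f \<theta> x
      - (fstar W h f \<theta> x powr (1 + \<alpha>) *\<^sub>R outer (sscore W h f \<theta> x) (sscore W h f \<theta> x)) *v v"
proof -
  obtain \<delta> where \<delta>: "0 < \<delta>" "\<delta> \<le> \<epsilon>" "\<forall>s\<in>{0..<\<delta>}. \<theta> + s *\<^sub>R v \<in> \<Theta>"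
    using obtain_segment_in_open assms(2-4) by blast
  have "((\<lambda>s. \<theta> + s *\<^sub>R v) has_vector_derivative v) (at 0 within {0..<\<delta>})"
    by (auto intro!: derivative_eq_intros)
  from has_vector_derivative_graph_compose[OF D this _ \<delta>(2,3)]
  have "((\<lambda>s. est_integrand W h f \<alpha> lam (gcontam W h f \<theta> y s) (\<theta> + s *\<^sub>R v) x)
      has_vector_derivative D (1, v)) (at 0 within {0..<\<delta>})"
    by simp
  moreover note has_vector_derivative_est_integrand_line[OF assms(5-7) \<delta>(3,1)]
  ultimately show ?thesis
    using vector_derivative_unique_within at_0_within_Ico_nontrivial[OF \<delta>(1)] by blast
qed

section \<open>Integrals under the kernel condition\<close>

lemma iterated_integrals_eq_lborel:
  fixes F :: "real \<Rightarrow> real \<Rightarrow> 'a::{banach, second_countable_topology}"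
  assumes F: "integrable (lborel \<Otimes>\<^sub>M lborel) (\<lambda>(x, z). F x z)"
    and A: "\<And>x. (LINT z|lborel. F x z) = A x" and B: "\<And>z. (LINT x|lborel. F x z) = B z"
  shows "integrable lborel A" and "(LINT x|lborel. A x) = (LINT z|lborel. B z)"
  using lborel_pair.integrable_fst[OF F] lborel_pair.integral_fst[OF F] lborel_pair.integral_snd[OF F]
  by (simp_all add: A B)

lemma integral_fstar_powr_sscore:
  fixes f :: "real^'p \<Rightarrow> real \<Rightarrow> real"
  assumes kernel: "\<forall>z. ualphastar W h f \<alpha> \<theta> z = f \<theta> z powr \<alpha> *\<^sub>R (M *v score f \<theta> z) + L"
    and fstar_pos: "\<forall>x. fstar W h f \<theta> x > 0" and f_pos: "\<forall>z. f \<theta> z > 0"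
    and f_int: "integrable lborel (f \<theta>)" and f_norm: "(LINT z|lborel. f \<theta> z) = 1"
    and fubini: "integrable (lborel \<Otimes>\<^sub>M lborel) (\<lambda>(x, z).
          (fstar W h f \<theta> x powr \<alpha> * W x z h * f \<theta> z) *\<^sub>R sscore W h f \<theta> x)"
    and score_int: "integrable lborel (\<lambda>z. f \<theta> z powr (1 + \<alpha>) *\<^sub>R score f \<theta> z)"
  shows "integrable lborel (\<lambda>x. fstar W h f \<theta> x powr (1 + \<alpha>) *\<^sub>R sscore W h f \<theta> x)"
    and "(LINT x|lborel. fstar W h f \<theta> x powr (1 + \<alpha>) *\<^sub>R sscore W h f \<theta> x)
       = M *v (LINT z|lborel. f \<theta> z powr (1 + \<alpha>) *\<^sub>R score f \<theta> z) + L"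
proof -
  have inner_z: "(LINT z|lborel. (fstar W h f \<theta> x powr \<alpha> * W x z h * f \<theta> z) *\<^sub>R sscore W h f \<theta> x)
      = fstar W h f \<theta> x powr (1 + \<alpha>) *\<^sub>R sscore W h f \<theta> x" for x
  proof -
    (* a non-integrable function has Bochner integral 0, but fstar is positive *)
    have "integrable lborel (\<lambda>z. W x z h * f \<theta> z)"
      using fstar_pos[rule_format, of x] not_integrable_integral_eq unfolding fstar_def by force
    then have "(LINT z|lborel. (fstar W h f \<theta> x powr \<alpha> * W x z h * f \<theta> z) *\<^sub>R sscore W h f \<theta> x)
        = (fstar W h f \<theta> x powr \<alpha> * fstar W h f \<theta> x) *\<^sub>R sscore W h f \<theta> x"
      by (simp add: fstar_def mult.assoc)
    moreover have "fstar W h f \<theta> x > 0" using fstar_pos by blast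
    ultimately show ?thesis by (simp add: powr_add mult.commute)
  qed
  have inner_x: "(LINT x|lborel. (fstar W h f \<theta> x powr \<alpha> * W x z h * f \<theta> z) *\<^sub>R sscore W h f \<theta> x)
      = M *v (f \<theta> z powr (1 + \<alpha>) *\<^sub>R score f \<theta> z) + f \<theta> z *\<^sub>R L" for z
  proof -
    have "(LINT x|lborel. (fstar W h f \<theta> x powr \<alpha> * W x z h * f \<theta> z) *\<^sub>R sscore W h f \<theta> x)
        = f \<theta> z *\<^sub>R ualphastar W h f \<alpha> \<theta> z"
      by (simp add: ualphastar_def mult_ac flip: integral_scaleR_right)
    then show ?thesis
      using kernel f_pos[rule_format, of z] by (simp add: powr_add matrix_vector_mult_scaleR algebra_simps)
  qed
  note swap = iterated_integrals_eq_lborel[OF fubini inner_z inner_x]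
  show "integrable lborel (\<lambda>x. fstar W h f \<theta> x powr (1 + \<alpha>) *\<^sub>R sscore W h f \<theta> x)"
    by (rule swap(1))
  have "(LINT x|lborel. fstar W h f \<theta> x powr (1 + \<alpha>) *\<^sub>R sscore W h f \<theta> x)
      = (LINT z|lborel. M *v (f \<theta> z powr (1 + \<alpha>) *\<^sub>R score f \<theta> z) + f \<theta> z *\<^sub>R L)"
    by (rule swap(2))
  also have "\<dots> = (LINT z|lborel. M *v (f \<theta> z powr (1 + \<alpha>) *\<^sub>R score f \<theta> z))
      + (LINT z|lborel. f \<theta> z *\<^sub>R L)"
    using f_int by (intro Bochner_Integration.integral_add integrable_bounded_linear[OF _ score_int]) auto
  also have "\<dots> = M *v (LINT z|lborel. f \<theta> z powr (1 + \<alpha>) *\<^sub>R score f \<theta> z) + L"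
    using integral_bounded_linear[OF matrix_vector_mul_bounded_linear score_int] f_int f_norm
    by simp
  finally show "(LINT x|lborel. fstar W h f \<theta> x powr (1 + \<alpha>) *\<^sub>R sscore W h f \<theta> x)
       = M *v (LINT z|lborel. f \<theta> z powr (1 + \<alpha>) *\<^sub>R score f \<theta> z) + L" .
qed

lemma integral_kernel_outer_pgrad:
  fixes f :: "real^'p \<Rightarrow> real \<Rightarrow> real"
  assumes diff: "(\<lambda>s. fstar W h f s x) differentiable (at \<theta>)" and pos: "fstar W h f \<theta> x > 0"
    and interchange: "integrable lborel (\<lambda>z. W x z h *\<^sub>R pgrad (\<lambda>s. f s z) \<theta>)"
      "pgrad (\<lambda>s. fstar W h f s x) \<theta> = (LINT z|lborel. W x z h *\<^sub>R pgrad (\<lambda>s. f s z) \<theta>)"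
  shows "(LINT z|lborel. (fstar W h f \<theta> x powr \<alpha> * W x z h) *\<^sub>R
        outer (sscore W h f \<theta> x) (pgrad (\<lambda>s. f s z) \<theta>))
      = fstar W h f \<theta> x powr (1 + \<alpha>) *\<^sub>R outer (sscore W h f \<theta> x) (sscore W h f \<theta> x)"
proof -
  let ?c = "fstar W h f \<theta> x powr \<alpha>" and ?U = "sscore W h f \<theta> x"
  have "(LINT z|lborel. (?c * W x z h) *\<^sub>R outer ?U (pgrad (\<lambda>s. f s z) \<theta>))
      = (LINT z|lborel. outer ?U (?c *\<^sub>R (W x z h *\<^sub>R pgrad (\<lambda>s. f s z) \<theta>)))"
    by (simp add: outer_scaleR_right)
  also have "\<dots> = outer ?U (LINT z|lborel. ?c *\<^sub>R (W x z h *\<^sub>R pgrad (\<lambda>s. f s z) \<theta>))"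
    using interchange(1)
    by (intro integral_bounded_linear bounded_bilinear.bounded_linear_right[OF bounded_bilinear_outer]
        integrable_scaleR_right)
  also have "\<dots> = outer ?U (?c *\<^sub>R pgrad (\<lambda>s. fstar W h f s x) \<theta>)"
    by (subst integral_scaleR_right) (use interchange(2) in simp)
  also have "pgrad (\<lambda>s. fstar W h f s x) \<theta> = fstar W h f \<theta> x *\<^sub>R ?U"
    using pgrad_eq_scaleR_pgrad_ln[OF diff pos] by (simp add: sscore_def)
  finally show ?thesis
    using pos by (simp add: outer_scaleR_right powr_add)
qed

lemma integral_fstar_powr_sscore_outer:
  fixes f :: "real^'p \<Rightarrow> real \<Rightarrow> real"
  assumes kernel: "\<forall>z. ualphastar W h f \<alpha> \<theta> z = f \<theta> z powr \<alpha> *\<^sub>R (M *v score f \<theta> z) + L"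
    and fstar_pos: "\<forall>x. fstar W h f \<theta> x > 0" and f_pos: "\<forall>z. f \<theta> z > 0"
    and fstar_diff: "\<forall>x. (\<lambda>s. fstar W h f s x) differentiable (at \<theta>)"
    and f_diff: "\<forall>z. (\<lambda>s. f s z) differentiable (at \<theta>)"
    and interchange: "\<forall>x. integrable lborel (\<lambda>z. W x z h *\<^sub>R pgrad (\<lambda>s. f s z) \<theta>)
          \<and> pgrad (\<lambda>s. fstar W h f s x) \<theta> = (LINT z|lborel. W x z h *\<^sub>R pgrad (\<lambda>s. f s z) \<theta>)"
    and grad_int: "integrable lborel (\<lambda>z. pgrad (\<lambda>s. f s z) \<theta>)"
    and grad_0: "(LINT z|lborel. pgrad (\<lambda>s. f s z) \<theta>) = 0"
    and ualpha_int: "\<forall>z. integrable lborel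
          (\<lambda>x. (fstar W h f \<theta> x powr \<alpha> * W x z h) *\<^sub>R sscore W h f \<theta> x)"
    and fubini: "integrable (lborel \<Otimes>\<^sub>M lborel) (\<lambda>(x, z).
          (fstar W h f \<theta> x powr \<alpha> * W x z h) *\<^sub>R outer (sscore W h f \<theta> x) (pgrad (\<lambda>s. f s z) \<theta>))"
    and score_int: "integrable lborel (\<lambda>z. f \<theta> z powr (1 + \<alpha>) *\<^sub>R outer (score f \<theta> z) (score f \<theta> z))"
  shows "integrable lborel
      (\<lambda>x. fstar W h f \<theta> x powr (1 + \<alpha>) *\<^sub>R outer (sscore W h f \<theta> x) (sscore W h f \<theta> x))"
    and "(LINT x|lborel. fstar W h f \<theta> x powr (1 + \<alpha>) *\<^sub>R outer (sscore W h f \<theta> x) (sscore W h f \<theta> x))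
       = M ** (LINT z|lborel. f \<theta> z powr (1 + \<alpha>) *\<^sub>R outer (score f \<theta> z) (score f \<theta> z))"
proof -
  let ?G = "\<lambda>z. pgrad (\<lambda>s. f s z) \<theta>"
  have G: "?G z = f \<theta> z *\<^sub>R score f \<theta> z" for z
    using pgrad_eq_scaleR_pgrad_ln[OF f_diff[rule_format] f_pos[rule_format]] by (simp add: score_def)
  have inner_z: "(LINT z|lborel. (fstar W h f \<theta> x powr \<alpha> * W x z h) *\<^sub>R outer (sscore W h f \<theta> x) (?G z))
      = fstar W h f \<theta> x powr (1 + \<alpha>) *\<^sub>R outer (sscore W h f \<theta> x) (sscore W h f \<theta> x)" for x
    using integral_kernel_outer_pgrad fstar_diff fstar_pos interchange by blast
  have inner_x: "(LINT x|lborel. (fstar W h f \<theta> x powr \<alpha> * W x z h) *\<^sub>R outer (sscore W h f \<theta> x) (?G z))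
      = M ** (f \<theta> z powr (1 + \<alpha>) *\<^sub>R outer (score f \<theta> z) (score f \<theta> z)) + outer L (?G z)" for z
  proof -
    have "(LINT x|lborel. (fstar W h f \<theta> x powr \<alpha> * W x z h) *\<^sub>R outer (sscore W h f \<theta> x) (?G z))
        = outer (ualphastar W h f \<alpha> \<theta> z) (?G z)"
      using integral_bounded_linear[OF bounded_bilinear.bounded_linear_left[OF bounded_bilinear_outer]
          ualpha_int[rule_format, of z]]
      by (simp add: ualphastar_def outer_scaleR_left)
    then show ?thesis
      using kernel f_pos[rule_format, of z]
      by (simp add: G outer_add_left outer_scaleR_left outer_scaleR_right outer_matrix_vector_mult
          bounded_bilinear.scaleR_right[OF bounded_bilinear_matrix_matrix_mult] powr_add mult.commute
          scaleR_add_right)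
  qed
  note swap = iterated_integrals_eq_lborel[OF fubini inner_z inner_x]
  show "integrable lborel
      (\<lambda>x. fstar W h f \<theta> x powr (1 + \<alpha>) *\<^sub>R outer (sscore W h f \<theta> x) (sscore W h f \<theta> x))"
    by (rule swap(1))
  have "(LINT x|lborel. fstar W h f \<theta> x powr (1 + \<alpha>) *\<^sub>R outer (sscore W h f \<theta> x) (sscore W h f \<theta> x))
      = (LINT z|lborel. M ** (f \<theta> z powr (1 + \<alpha>) *\<^sub>R outer (score f \<theta> z) (score f \<theta> z)) + outer L (?G z))"
    by (rule swap(2))
  also have "\<dots> = (LINT z|lborel. M ** (f \<theta> z powr (1 + \<alpha>) *\<^sub>R outer (score f \<theta> z) (score f \<theta> z)))
      + (LINT z|lborel. outer L (?G z))"
    by (intro Bochner_Integration.integral_add integrable_bounded_linear[OF _ score_int]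
        integrable_bounded_linear[OF _ grad_int] bounded_bilinear.bounded_linear_right
        bounded_bilinear_matrix_matrix_mult bounded_bilinear_outer)
  also have "\<dots> = M ** (LINT z|lborel. f \<theta> z powr (1 + \<alpha>) *\<^sub>R outer (score f \<theta> z) (score f \<theta> z))"
    using integral_bounded_linear[OF bounded_bilinear.bounded_linear_right[OF bounded_bilinear_matrix_matrix_mult] score_int]
      integral_bounded_linear[OF bounded_bilinear.bounded_linear_right[OF bounded_bilinear_outer] grad_int] grad_0
    by (simp add: bounded_bilinear.zero_right[OF bounded_bilinear_outer])
  finally show "(LINT x|lborel. fstar W h f \<theta> x powr (1 + \<alpha>) *\<^sub>R outer (sscore W h f \<theta> x) (sscore W h f \<theta> x))
       = M ** (LINT z|lborel. f \<theta> z powr (1 + \<alpha>) *\<^sub>R outer (score f \<theta> z) (score f \<theta> z))" .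
qed

theorem corollary3:
  fixes f :: "real^'p \<Rightarrow> real \<Rightarrow> real"
    and \<Theta> :: "(real^'p) set" and \<theta> :: "real^'p"
    and W :: "real \<Rightarrow> real \<Rightarrow> real \<Rightarrow> real" and h \<alpha> lam :: real
    and M :: "real^'p \<Rightarrow> real^'p^'p" and L :: "real^'p"
    and T :: "(real \<Rightarrow> real) \<Rightarrow> real^'p"
    and y \<epsilon>0 :: real and IF :: "real^'p"
    and D\<phi> :: "real \<Rightarrow> (real \<times> (real^'p)) \<Rightarrow> real^'p"
  assumes \<Theta>_open: "open \<Theta>" and \<theta>_in: "\<theta> \<in> \<Theta>"
    and \<alpha>_nonneg: "\<alpha> \<ge> 0" and h_pos: "h > 0"
    \<comment> \<open>parametric family of (everywhere positive) Lebesgue densities\<close>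
    and f_pos: "\<forall>t\<in>\<Theta>. \<forall>z. f t z > 0"
    and f_meas: "\<forall>t\<in>\<Theta>. f t \<in> borel_measurable lborel"
    and f_dens: "\<forall>t\<in>\<Theta>. integrable lborel (f t) \<and> (LINT z|lborel. f t z) = 1"
    \<comment> \<open>kernel: a probability density in x for each y\<close>
    and W_nonneg: "\<forall>x z. W x z h \<ge> 0"
    and W_meas: "(\<lambda>(x, z). W x z h) \<in> borel_measurable (lborel \<Otimes>\<^sub>M lborel)"
    and W_dens: "\<forall>z. integrable lborel (\<lambda>x. W x z h) \<and> (LINT x|lborel. W x z h) = 1"
    \<comment> \<open>regularity conditions (differentiability, interchange of derivative and integral, Fubini)\<close>
    and fstar_pos: "\<forall>t\<in>\<Theta>. \<forall>x. fstar W h f t x > 0"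
    and f_diff: "\<forall>z. (\<lambda>s. f s z) differentiable (at \<theta>)"
    and fstar_C1: "\<forall>x. (\<forall>t\<in>\<Theta>. (\<lambda>s. fstar W h f s x) differentiable (at t))
                        \<and> continuous_on \<Theta> (\<lambda>t. pgrad (\<lambda>s. fstar W h f s x) t)"
    and fstar_interchange: "\<forall>x. integrable lborel (\<lambda>z. W x z h *\<^sub>R pgrad (\<lambda>s. f s z) \<theta>)
          \<and> pgrad (\<lambda>s. fstar W h f s x) \<theta> = (LINT z|lborel. W x z h *\<^sub>R pgrad (\<lambda>s. f s z) \<theta>)"
    and f_interchange: "integrable lborel (\<lambda>z. pgrad (\<lambda>s. f s z) \<theta>)"
          "((\<lambda>t. LINT z|lborel. f t z) has_derivative
              (\<lambda>d. LINT z|lborel. pgrad (\<lambda>s. f s z) \<theta> \<bullet> d)) (at \<theta>)"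
    and ualpha_integrable: "\<forall>z. integrable lborel
          (\<lambda>x. (fstar W h f \<theta> x powr \<alpha> * W x z h) *\<^sub>R sscore W h f \<theta> x)"
    and fubini1: "integrable (lborel \<Otimes>\<^sub>M lborel) (\<lambda>(x, z).
          (fstar W h f \<theta> x powr \<alpha> * W x z h * f \<theta> z) *\<^sub>R sscore W h f \<theta> x)"
    and fubini2: "integrable (lborel \<Otimes>\<^sub>M lborel) (\<lambda>(x, z).
          (fstar W h f \<theta> x powr \<alpha> * W x z h) *\<^sub>R outer (sscore W h f \<theta> x) (pgrad (\<lambda>s. f s z) \<theta>))"
    and score_integrable:
          "integrable lborel (\<lambda>z. f \<theta> z powr (1 + \<alpha>) *\<^sub>R score f \<theta> z)"
          "integrable lborel (\<lambda>z. f \<theta> z powr (1 + \<alpha>) *\<^sub>R outer (score f \<theta> z) (score f \<theta> z))"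
    and est_deriv_pointwise: "\<forall>x. ((\<lambda>(e, t). est_integrand W h f \<alpha> lam (gcontam W h f \<theta> y e) t x)
          has_derivative D\<phi> x) (at (0, \<theta>) within {0..<\<epsilon>0} \<times> \<Theta>)"
    and est_deriv_interchange: "((\<lambda>(e, t). est_fun W h f \<alpha> lam (gcontam W h f \<theta> y e) t)
          has_derivative (\<lambda>v. LINT x|lborel. D\<phi> x v)) (at (0, \<theta>) within {0..<\<epsilon>0} \<times> \<Theta>)"
    \<comment> \<open>T is the minimum S*-divergence functional along the contamination path
        (it minimizes S(g*, f*_t) and solves the estimating equation), Fisher consistent at F_theta\<close>
    and \<epsilon>0: "0 < \<epsilon>0" "\<epsilon>0 \<le> 1"
    and T_min: "\<forall>\<epsilon>\<in>{0..<\<epsilon>0}. T (gcontam W h f \<theta> y \<epsilon>) \<in> \<Theta> \<and>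
          (\<forall>t\<in>\<Theta>. Sdiv \<alpha> lam (gcontam W h f \<theta> y \<epsilon>) (fstar W h f (T (gcontam W h f \<theta> y \<epsilon>)))
                   \<le> Sdiv \<alpha> lam (gcontam W h f \<theta> y \<epsilon>) (fstar W h f t))"
    and T_est: "\<forall>\<epsilon>\<in>{0..<\<epsilon>0}.
          est_fun W h f \<alpha> lam (gcontam W h f \<theta> y \<epsilon>) (T (gcontam W h f \<theta> y \<epsilon>)) = 0"
    and T_fisher: "T (fstar W h f \<theta>) = \<theta>"
    \<comment> \<open>the influence function IF(y; F_theta, T*) exists (derivative along the contamination path)\<close>
    and IF_def: "((\<lambda>\<epsilon>. T (gcontam W h f \<theta> y \<epsilon>)) has_vector_derivative IF) (at 0 within {0..<\<epsilon>0})"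
    \<comment> \<open>the kernel condition of the corollary\<close>
    and M_nonsing: "invertible (M \<theta>)"
    and kernel_cond: "\<forall>z. ualphastar W h f \<alpha> \<theta> z = (f \<theta> z powr \<alpha>) *\<^sub>R (M \<theta> *v score f \<theta> z) + L"
    and column_cond: "\<forall>j. (LINT z|lborel. f \<theta> z powr (1 + \<alpha>) * score f \<theta> z $ j) = 0
                          \<or> (\<forall>s\<in>\<Theta>. column j (M s) = column j (M \<theta>))"
    and J_nonsing: "invertible (LINT z|lborel. f \<theta> z powr (1 + \<alpha>) *\<^sub>R outer (score f \<theta> z) (score f \<theta> z))"
  shows "IF = matrix_inv (LINT z|lborel. f \<theta> z powr (1 + \<alpha>) *\<^sub>R outer (score f \<theta> z) (score f \<theta> z))
              *v (f \<theta> y powr \<alpha> *\<^sub>R score f \<theta> y - (LINT z|lborel. f \<theta> z powr (1 + \<alpha>) *\<^sub>R score f \<theta> z))"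
proof -
  define J where "J = (LINT z|lborel. f \<theta> z powr (1 + \<alpha>) *\<^sub>R outer (score f \<theta> z) (score f \<theta> z))"
  define \<xi> where "\<xi> = (LINT z|lborel. f \<theta> z powr (1 + \<alpha>) *\<^sub>R score f \<theta> z)"
  define a where "a = (\<lambda>x. (fstar W h f \<theta> x powr \<alpha> * W x y h) *\<^sub>R sscore W h f \<theta> x)"
  define b where "b = (\<lambda>x. fstar W h f \<theta> x powr (1 + \<alpha>) *\<^sub>R sscore W h f \<theta> x)"
  define c where "c = (\<lambda>x. fstar W h f \<theta> x powr (1 + \<alpha>) *\<^sub>R outer (sscore W h f \<theta> x) (sscore W h f \<theta> x))"
  have pointwise: "D\<phi> x (1, IF) = a x - b x - c x *v IF" for x
    using est_integrand_derivative_direction[OF est_deriv_pointwise[rule_format] \<Theta>_open \<theta>_in \<epsilon>0(1)]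
      fstar_pos fstar_C1 by (simp add: a_def b_def c_def)
  have "(LINT x|lborel. D\<phi> x (1, IF)) = 0"
  proof (rule graph_derivative_eq_0[OF est_deriv_interchange IF_def _ \<epsilon>0(1)])
    have "gcontam W h f \<theta> y 0 = fstar W h f \<theta>" by (simp add: fun_eq_iff gcontam_def)
    then show "T (gcontam W h f \<theta> y 0) = \<theta>" using T_fisher by simp
  qed (use T_min T_est in simp)
  moreover have a: "integrable lborel a" "(LINT x|lborel. a x) = f \<theta> y powr \<alpha> *\<^sub>R (M \<theta> *v score f \<theta> y) + L"
    using ualpha_integrable kernel_cond by (simp_all add: a_def ualphastar_def)
  moreover have b: "integrable lborel b" "(LINT x|lborel. b x) = M \<theta> *v \<xi> + L"
    using integral_fstar_powr_sscore[OF kernel_cond _ _ _ _ fubini1 score_integrable(1)]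
      fstar_pos f_pos f_dens \<theta>_in by (simp_all add: b_def \<xi>_def)
  moreover have c: "integrable lborel c" "(LINT x|lborel. c x) = M \<theta> ** J"
    using integral_fstar_powr_sscore_outer[OF kernel_cond _ _ _ f_diff fstar_interchange
        f_interchange(1) integral_pgrad_density_eq_0[OF \<Theta>_open \<theta>_in _ f_interchange]
        ualpha_integrable fubini2 score_integrable(2)]
      fstar_pos f_pos fstar_C1 f_dens \<theta>_in by (simp_all add: c_def J_def)
  moreover have "integrable lborel (\<lambda>x. c x *v IF)" "(LINT x|lborel. c x *v IF) = (M \<theta> ** J) *v IF"
    using integrable_bounded_linear[OF _ c(1)] integral_bounded_linear[OF _ c(1)] c(2)
      bounded_bilinear.bounded_linear_left[OF bounded_bilinear_matrix_vector_mult, of IF] by auto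
  ultimately have "M \<theta> *v (f \<theta> y powr \<alpha> *\<^sub>R score f \<theta> y) + L - (M \<theta> *v \<xi> + L) - (M \<theta> ** J) *v IF = 0"
    by (simp add: pointwise matrix_vector_mult_scaleR)
  with M_nonsing J_nonsing show ?thesis
    unfolding J_def \<xi>_def by (rule matrix_inv_solve_cancel)
qed

end
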